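(* Let $H_3$ be the simply connected 3-dimensional Heisenberg group, realized as $\mathbb{R}^3$ with coordinates $(x,y,z)$ and group law $(a,b,c)\cdot(x,y,z)=(a+x,\,b+y,\,c+z-ay)$, so that $F_1=\partial_z$, $F_2=\partial_y-x\partial_z$, $F_3=\partial_x$ are left-invariant with the only nonzero bracket $[F_2,F_3]=F_1$. Consider the left-invariant Lorentzian metrics $g_1=-dx^2+dy^2+(x\,dy+dz)^2$ and $g_2=dx^2+dy^2-(x\,dy+dz)^2$ (so $g_1$ makes $F_1,F_2,F_3$ orthonormal with $F_3$ timelike, and $g_2$ makes them orthonormal with $F_1$ timelike). Then $g_1$ and $g_2$ are nilsolitons, and each of $(\mathfrak{h}_3,g_1)$, $(\mathfrak{h}_3,g_2)$ admits a metric solvable extension which is an Einstein metric.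
   Context: For a simply connected Lie group $G$ with Lie algebra $\mathfrak{g}$ and left-invariant pseudo-Riemannian metric $g$, $g$ is an algebraic Ricci soliton if $\mathrm{ric}=c\,\mathrm{Id}+D$ for some $c\in\mathbb{R}$ and some derivation $D$ of $\mathfrak{g}$, where $\mathrm{ric}$ is the Ricci operator ($g(\mathrm{ric}X,Y)=\mathrm{Ric}(X,Y)$); it is a nilsoliton if $G$ is nilpotent. A metric solvable extension of $(\mathfrak{n},g)$ is a solvable Lie algebra $\mathfrak{s}=\mathfrak{a}\oplus\mathfrak{n}$ (as vector spaces) with bracket $[\cdot,\cdot]'$ and a pseudo-Riemannian inner product $\tilde g$ such that $[\mathfrak{s},\mathfrak{s}]'=\mathfrak{n}=\mathfrak{a}^{\perp}$, $[X,Y]'=[X,Y]$ and $\tilde g(X,Y)=g(X,Y)$ for all $X,Y\in\mathfrak{n}$. It is Einstein if the corresponding left-invariant metric satisfies $\mathrm{Ric}(\tilde g)=\kappa\tilde g$ for a constant $\kappa$. $\mathfrak{h}_3$ denotes the Lie algebra of $H_3$. *)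

theory Defs
  imports Main "HOL.Real"
begin

text \<open>
  A Lie algebra of
  dimension N has basis e_0,...,e_(N-1); it is given by structure constants
  c i j k = (e_k-component of [e_i,e_j]).
\<close>

type_synonym sconst = "nat \<Rightarrow> nat \<Rightarrow> nat \<Rightarrow> real"
type_synonym gram = "nat \<Rightarrow> nat \<Rightarrow> real"

definition vecs :: "nat \<Rightarrow> (nat \<Rightarrow> real) set" where
  "vecs N = {X. \<forall>i\<ge>N. X i = 0}"

definition lin_span :: "(nat \<Rightarrow> real) set \<Rightarrow> (nat \<Rightarrow> real) set" where
  "lin_span S = {v. \<exists>F a. finite F \<and> F \<subseteq> S \<and> v = (\<lambda>p. \<Sum>u\<in>F. a u * u p)}"

definition brk :: "nat \<Rightarrow> sconst \<Rightarrow> (nat \<Rightarrow> real) \<Rightarrow> (nat \<Rightarrow> real) \<Rightarrow> (nat \<Rightarrow> real)" where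
  "brk N c X Y = (\<lambda>k. if k < N then (\<Sum>i<N. \<Sum>j<N. X i * Y j * c i j k) else 0)"

definition ip :: "nat \<Rightarrow> gram \<Rightarrow> (nat \<Rightarrow> real) \<Rightarrow> (nat \<Rightarrow> real) \<Rightarrow> real" where
  "ip N G X Y = (\<Sum>i<N. \<Sum>j<N. X i * G i j * Y j)"

definition lie_alg :: "nat \<Rightarrow> sconst \<Rightarrow> bool" where
  "lie_alg N c \<longleftrightarrow>
     (\<forall>i<N. \<forall>j<N. \<forall>k<N. c i j k = - c j i k) \<and>
     (\<forall>i<N. \<forall>j<N. \<forall>l<N. \<forall>p<N.
        (\<Sum>m<N. c j l m * c i m p + c l i m * c j m p + c i j m * c l m p) = 0)"

definition pr_metric :: "nat \<Rightarrow> gram \<Rightarrow> bool" where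
  "pr_metric N G \<longleftrightarrow>
     (\<forall>i<N. \<forall>j<N. G i j = G j i) \<and>
     (\<forall>X\<in>vecs N. (\<forall>Y\<in>vecs N. ip N G X Y = 0) \<longrightarrow> X = (\<lambda>_. 0))"

fun lcs :: "nat \<Rightarrow> sconst \<Rightarrow> nat \<Rightarrow> (nat \<Rightarrow> real) set" where
  "lcs N c 0 = vecs N"
| "lcs N c (Suc m) = lin_span {brk N c X Y | X Y. X \<in> vecs N \<and> Y \<in> lcs N c m}"

fun dser :: "nat \<Rightarrow> sconst \<Rightarrow> nat \<Rightarrow> (nat \<Rightarrow> real) set" where
  "dser N c 0 = vecs N"
| "dser N c (Suc m) = lin_span {brk N c X Y | X Y. X \<in> dser N c m \<and> Y \<in> dser N c m}"

definition nilpotent_la :: "nat \<Rightarrow> sconst \<Rightarrow> bool" where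
  "nilpotent_la N c \<longleftrightarrow> (\<exists>m. lcs N c m = {\<lambda>_. 0})"

definition solvable_la :: "nat \<Rightarrow> sconst \<Rightarrow> bool" where
  "solvable_la N c \<longleftrightarrow> (\<exists>m. dser N c m = {\<lambda>_. 0})"

text \<open>Levi-Civita connection of the left-invariant metric, on the basis:
  Gam i j k = e_k-component of nabla_(e_i) e_j, determined by the Koszul formula
  2 g(nabla_X Y, Z) = g([X,Y],Z) - g([Y,Z],X) + g([Z,X],Y).\<close>
definition christoffel :: "nat \<Rightarrow> sconst \<Rightarrow> gram \<Rightarrow> sconst" where
  "christoffel N c G = (THE Gam.
     (\<forall>i j k. (i \<ge> N \<or> j \<ge> N \<or> k \<ge> N) \<longrightarrow> Gam i j k = 0) \<and>
     (\<forall>i<N. \<forall>j<N. \<forall>l<N.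
        (\<Sum>k<N. Gam i j k * G k l) =
        ((\<Sum>m<N. c i j m * G m l) - (\<Sum>m<N. c j l m * G m i) + (\<Sum>m<N. c l i m * G m j)) / 2))"

text \<open>curvature R(X,Y) = [nabla_X, nabla_Y] - nabla_[X,Y];
  curv a b d p = e_p-component of R(e_a,e_b) e_d\<close>
definition curv :: "nat \<Rightarrow> sconst \<Rightarrow> gram \<Rightarrow> nat \<Rightarrow> nat \<Rightarrow> nat \<Rightarrow> nat \<Rightarrow> real" where
  "curv N c G a b d p = (let Gam = christoffel N c G in
     (\<Sum>m<N. Gam b d m * Gam a m p - Gam a d m * Gam b m p - c a b m * Gam m d p))"

text \<open>Ricci tensor Ric(X,Y) = trace(Z \<mapsto> R(Z,X)Y), on the basis\<close>
definition ricci :: "nat \<Rightarrow> sconst \<Rightarrow> gram \<Rightarrow> gram" where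
  "ricci N c G i j = (\<Sum>a<N. curv N c G a i j a)"

text \<open>Ricci operator: g(ric X, Y) = Ric(X,Y); matrix r k i = e_k-component of ric e_i\<close>
definition ricci_op :: "nat \<Rightarrow> sconst \<Rightarrow> gram \<Rightarrow> nat \<Rightarrow> nat \<Rightarrow> real" where
  "ricci_op N c G = (THE r.
     (\<forall>k i. (k \<ge> N \<or> i \<ge> N) \<longrightarrow> r k i = 0) \<and>
     (\<forall>i<N. \<forall>l<N. (\<Sum>k<N. r k i * G k l) = ricci N c G i l))"

text \<open>derivation, as matrix: D e_j = sum_k D k j e_k\<close>
definition derivation :: "nat \<Rightarrow> sconst \<Rightarrow> (nat \<Rightarrow> nat \<Rightarrow> real) \<Rightarrow> bool" where
  "derivation N c D \<longleftrightarrow>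
     (\<forall>i<N. \<forall>j<N. \<forall>k<N.
        (\<Sum>m<N. c i j m * D k m) = (\<Sum>m<N. D m i * c m j k) + (\<Sum>m<N. D m j * c i m k))"

definition alg_ricci_soliton :: "nat \<Rightarrow> sconst \<Rightarrow> gram \<Rightarrow> bool" where
  "alg_ricci_soliton N c G \<longleftrightarrow> lie_alg N c \<and> pr_metric N G \<and>
     (\<exists>(cst::real) D. derivation N c D \<and>
        (\<forall>k<N. \<forall>i<N. ricci_op N c G k i = cst * (if k = i then 1 else 0) + D k i))"

definition nilsoliton :: "nat \<Rightarrow> sconst \<Rightarrow> gram \<Rightarrow> bool" where
  "nilsoliton N c G \<longleftrightarrow> nilpotent_la N c \<and> alg_ricci_soliton N c G"

definition einstein :: "nat \<Rightarrow> sconst \<Rightarrow> gram \<Rightarrow> bool" where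
  "einstein N c G \<longleftrightarrow> (\<exists>\<kappa>::real. \<forall>i<N. \<forall>j<N. ricci N c G i j = \<kappa> * G i j)"

text \<open>metric solvable extension s = a (+) n of (n, c, G): s has basis
  e_0..e_(n-1) (spanning n) and e_n..e_(n+k-1) (spanning a).\<close>
definition metric_solv_ext :: "nat \<Rightarrow> sconst \<Rightarrow> gram \<Rightarrow> nat \<Rightarrow> sconst \<Rightarrow> gram \<Rightarrow> bool" where
  "metric_solv_ext n c G N c' G' \<longleftrightarrow>
     n \<le> N \<and> lie_alg N c' \<and> solvable_la N c' \<and> pr_metric N G' \<and>
     dser N c' 1 = vecs n \<and>
     {X\<in>vecs N. \<forall>Y\<in>vecs N. (\<forall>i<n. Y i = 0) \<longrightarrow> ip N G' X Y = 0} = vecs n \<and>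
     (\<forall>i<n. \<forall>j<n. \<forall>k<N. c' i j k = (if k < n then c i j k else 0)) \<and>
     (\<forall>i<n. \<forall>j<n. G' i j = G i j)"

text \<open>Heisenberg algebra h3 in the basis F1,F2,F3 (indices 0,1,2): [F2,F3] = F1\<close>
definition h3 :: sconst where
  "h3 i j k = (if i = 1 \<and> j = 2 \<and> k = 0 then 1
               else if i = 2 \<and> j = 1 \<and> k = 0 then -1 else 0)"

definition g1 :: gram where
  "g1 i j = (if i = j \<and> i < 3 then (if i = 2 then -1 else 1) else 0)"

definition g2 :: gram where
  "g2 i j = (if i = j \<and> i < 3 then (if i = 0 then -1 else 1) else 0)"

end

theory Submission imports Defs begin

text \<open>
  Both metrics are diagonal in the basis F1, F2, F3, and for any diagonal metric
  diag(d0, d1, d2) on h3 the Koszul formula gives Ric = \<rho> diag(1, -1, -1) g with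
  \<rho> = d0 / (2 d1 d2). Hence ric = -3\<rho> Id + D for the derivation D = 2\<rho> diag(2, 1, 1)
  that scales the centre with weight 2. Adjoining e3 acting on h3 by diag(1, 1/2, 1/2),
  a multiple of D, and declaring it orthogonal to h3 with g(e3, e3) = d1 d2 / d0 gives
  a solvable extension whose Ricci tensor is -3\<rho> g.
\<close>

lemma sum_lessThan_3: "(\<Sum>i<(3::nat). f i) = f 0 + f 1 + f 2"
  by (simp add: eval_nat_numeral)

lemma sum_lessThan_4: "(\<Sum>i<(4::nat). f i) = f 0 + f 1 + f 2 + f 3"
  by (simp add: eval_nat_numeral)

lemma all_lessThan_3: "(\<forall>i<(3::nat). P i) \<longleftrightarrow> P 0 \<and> P 1 \<and> P 2"
  by (auto simp: eval_nat_numeral less_Suc_eq)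

lemma all_lessThan_4: "(\<forall>i<(4::nat). P i) \<longleftrightarrow> P 0 \<and> P 1 \<and> P 2 \<and> P 3"
  by (auto simp: eval_nat_numeral less_Suc_eq)

definition diag_gram :: "nat \<Rightarrow> (nat \<Rightarrow> real) \<Rightarrow> gram" where
  "diag_gram N d i j = (if i = j \<and> i < N then d i else 0)"

lemma sum_mult_diag_gram:
  assumes "l < N"
  shows "(\<Sum>k<N. f k * diag_gram N d k l) = f l * d l"
proof -
  have "(\<Sum>k<N. f k * diag_gram N d k l) = (\<Sum>k<N. if k = l then f l * d l else 0)"
    by (rule sum.cong) (auto simp: diag_gram_def)
  also have "\<dots> = f l * d l"
    using assms by simp
  finally show ?thesis .
qed

lemma ip_diag_gram: "ip N (diag_gram N d) X Y = (\<Sum>i<N. X i * d i * Y i)"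
proof -
  have "(\<Sum>j<N. X i * diag_gram N d i j * Y j) = X i * d i * Y i" if "i < N" for i
  proof -
    have "(\<Sum>j<N. X i * diag_gram N d i j * Y j) = (\<Sum>j<N. if j = i then X i * d i * Y i else 0)"
      by (rule sum.cong) (auto simp: diag_gram_def)
    then show ?thesis
      using that by simp
  qed
  then show ?thesis
    unfolding ip_def by (intro sum.cong) auto
qed

lemma ip_diag_gram_unit_vector:
  assumes "p < N"
  shows "ip N (diag_gram N d) X (\<lambda>i. if i = p then 1 else 0) = X p * d p"
  using assms by (simp add: ip_diag_gram if_distrib cong: if_cong)

lemma pr_metric_diag_gram:
  assumes "\<forall>i<N. d i \<noteq> 0"
  shows "pr_metric N (diag_gram N d)"
  unfolding pr_metric_def
proof (intro conjI ballI impI allI)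
  fix i j
  show "diag_gram N d i j = diag_gram N d j i"
    by (auto simp: diag_gram_def)
next
  fix X assume X: "X \<in> vecs N" and orth: "\<forall>Y\<in>vecs N. ip N (diag_gram N d) X Y = 0"
  show "X = (\<lambda>_. 0)"
  proof
    fix p
    show "X p = 0"
    proof (cases "p < N")
      case True
      let ?e = "\<lambda>i. if i = p then 1 else (0::real)"
      have "?e \<in> vecs N"
        using True by (auto simp: vecs_def)
      with orth have "ip N (diag_gram N d) X ?e = 0" by blast
      moreover have "ip N (diag_gram N d) X ?e = X p * d p"
        using True by (rule ip_diag_gram_unit_vector)
      ultimately show ?thesis
        using assms True by simp
    next
      case False
      then show ?thesis using X by (simp add: vecs_def)
    qed
  qed
qed

text \<open>For a diagonal metric the Koszul formula can be solved for each coefficient separately.\<close>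
definition christoffel_diag :: "nat \<Rightarrow> sconst \<Rightarrow> (nat \<Rightarrow> real) \<Rightarrow> sconst" where
  "christoffel_diag N c d i j l =
     (if i < N \<and> j < N \<and> l < N
      then (c i j l * d l - c j l i * d i + c l i j * d j) / (2 * d l) else 0)"

lemma christoffel_diag_gram:
  assumes d: "\<forall>i<N. d i \<noteq> 0"
  shows "christoffel N c (diag_gram N d) = christoffel_diag N c d"
  unfolding christoffel_def
proof (rule the_equality)
  show "(\<forall>i j k. (i \<ge> N \<or> j \<ge> N \<or> k \<ge> N) \<longrightarrow> christoffel_diag N c d i j k = 0) \<and>
     (\<forall>i<N. \<forall>j<N. \<forall>l<N.
        (\<Sum>k<N. christoffel_diag N c d i j k * diag_gram N d k l) =
        ((\<Sum>m<N. c i j m * diag_gram N d m l) - (\<Sum>m<N. c j l m * diag_gram N d m i)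
          + (\<Sum>m<N. c l i m * diag_gram N d m j)) / 2)"
  proof (intro conjI allI impI)
    fix i j l
    assume ijl: "i < N" "j < N" "l < N"
    show "(\<Sum>k<N. christoffel_diag N c d i j k * diag_gram N d k l) =
        ((\<Sum>m<N. c i j m * diag_gram N d m l) - (\<Sum>m<N. c j l m * diag_gram N d m i)
          + (\<Sum>m<N. c l i m * diag_gram N d m j)) / 2"
      unfolding sum_mult_diag_gram[OF ijl(1)] sum_mult_diag_gram[OF ijl(2)] sum_mult_diag_gram[OF ijl(3)]
      using d ijl by (simp add: christoffel_diag_def field_simps)
  qed (auto simp: christoffel_diag_def)
next
  fix Gam
  assume Gam: "(\<forall>i j k. (i \<ge> N \<or> j \<ge> N \<or> k \<ge> N) \<longrightarrow> Gam i j k = 0) \<and>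
     (\<forall>i<N. \<forall>j<N. \<forall>l<N.
        (\<Sum>k<N. Gam i j k * diag_gram N d k l) =
        ((\<Sum>m<N. c i j m * diag_gram N d m l) - (\<Sum>m<N. c j l m * diag_gram N d m i)
          + (\<Sum>m<N. c l i m * diag_gram N d m j)) / 2)"
  show "Gam = christoffel_diag N c d"
  proof (intro ext)
    fix i j l
    show "Gam i j l = christoffel_diag N c d i j l"
    proof (cases "i < N \<and> j < N \<and> l < N")
      case True
      then have "Gam i j l * d l = (c i j l * d l - c j l i * d i + c l i j * d j) / 2"
        using Gam by (simp add: sum_mult_diag_gram)
      then show ?thesis
        using True d by (simp add: christoffel_diag_def field_simps)
    next
      case False
      then show ?thesis using Gam by (auto simp: christoffel_diag_def)
    qed
  qed
qed

lemma ricci_op_diag_gram: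
  assumes d: "\<forall>i<N. d i \<noteq> 0"
  shows "ricci_op N c (diag_gram N d) =
    (\<lambda>k i. if k < N \<and> i < N then ricci N c (diag_gram N d) i k / d k else 0)"
  unfolding ricci_op_def
proof (rule the_equality)
  fix r
  assume r: "(\<forall>k i. (k \<ge> N \<or> i \<ge> N) \<longrightarrow> r k i = 0) \<and>
     (\<forall>i<N. \<forall>l<N. (\<Sum>k<N. r k i * diag_gram N d k l) = ricci N c (diag_gram N d) i l)"
  show "r = (\<lambda>k i. if k < N \<and> i < N then ricci N c (diag_gram N d) i k / d k else 0)"
  proof (intro ext)
    fix k i
    show "r k i = (if k < N \<and> i < N then ricci N c (diag_gram N d) i k / d k else 0)"
    proof (cases "k < N \<and> i < N")
      case True
      then have "r k i * d k = ricci N c (diag_gram N d) i k"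
        using r by (simp add: sum_mult_diag_gram)
      then show ?thesis
        using True d by (simp add: field_simps)
    next
      case False
      then show ?thesis using r by auto
    qed
  qed
next
  show "(\<forall>k i. (k \<ge> N \<or> i \<ge> N) \<longrightarrow>
      (\<lambda>k i. if k < N \<and> i < N then ricci N c (diag_gram N d) i k / d k else 0) k i = 0) \<and>
    (\<forall>i<N. \<forall>l<N. (\<Sum>k<N. (\<lambda>k i. if k < N \<and> i < N then ricci N c (diag_gram N d) i k / d k else 0) k i
      * diag_gram N d k l) = ricci N c (diag_gram N d) i l)"
  proof (intro conjI allI impI)
    fix i l
    assume i: "i < N" and l: "l < N"
    show "(\<Sum>k<N. (\<lambda>k i. if k < N \<and> i < N then ricci N c (diag_gram N d) i k / d k else 0) k i
      * diag_gram N d k l) = ricci N c (diag_gram N d) i l"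
      unfolding sum_mult_diag_gram[OF l] using d i l by simp
  qed auto
qed

lemma lin_span_zero: "(\<lambda>_. 0) \<in> lin_span S"
  unfolding lin_span_def by (rule CollectI, rule exI[of _ "{}"]) auto

lemma lin_span_superset: "u \<in> S \<Longrightarrow> u \<in> lin_span S"
  unfolding lin_span_def by (rule CollectI, rule exI[of _ "{u}"]) (auto intro!: exI[of _ "\<lambda>_. 1"])

lemma lin_span_coordinate_zero: "v \<in> lin_span S \<Longrightarrow> (\<And>u. u \<in> S \<Longrightarrow> u p = 0) \<Longrightarrow> v p = 0"
  unfolding lin_span_def by (auto intro!: sum.neutral)

lemma lin_span_eq_zero:
  assumes "\<And>u. u \<in> S \<Longrightarrow> u = (\<lambda>_. 0)"
  shows "lin_span S = {\<lambda>_. 0}"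
proof -
  have "v p = 0" if "v \<in> lin_span S" for v p
    using that by (rule lin_span_coordinate_zero) (auto dest: assms)
  then show ?thesis
    using lin_span_zero by (auto simp: fun_eq_iff)
qed

lemma brk_h3: "brk 3 h3 X Y = (\<lambda>k. if k = 0 then X 1 * Y 2 - X 2 * Y 1 else 0)"
  by (auto simp: fun_eq_iff brk_def sum_lessThan_3 h3_def)

lemma lie_alg_h3: "lie_alg 3 h3"
  unfolding lie_alg_def by (simp add: all_lessThan_3 sum_lessThan_3 h3_def)

lemma nilpotent_h3: "nilpotent_la 3 h3"
proof -
  have lcs1: "Y p = 0" if "Y \<in> lcs 3 h3 1" "p \<noteq> 0" for Y p
    using that by (auto simp: brk_h3 elim!: lin_span_coordinate_zero)
  have "lcs 3 h3 2 = {\<lambda>_. 0}"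
    unfolding lcs.simps(2)[of _ _ 1, unfolded Suc_1]
  proof (rule lin_span_eq_zero)
    fix u
    assume "u \<in> {brk 3 h3 X Y |X Y. X \<in> vecs 3 \<and> Y \<in> lcs 3 h3 1}"
    then obtain X Y where u: "u = brk 3 h3 X Y" and "Y \<in> lcs 3 h3 1"
      by blast
    then have "Y 1 = 0" "Y 2 = 0"
      using lcs1 by simp_all
    then show "u = (\<lambda>_. 0)"
      unfolding u brk_h3 by (simp add: fun_eq_iff)
  qed
  then show ?thesis
    unfolding nilpotent_la_def by blast
qed

definition h3_dilation :: "real \<Rightarrow> nat \<Rightarrow> nat \<Rightarrow> real" where
  "h3_dilation \<mu> k i = (if k = i \<and> k < 3 then \<mu> * (if k = 0 then 2 else 1) else 0)"

lemma derivation_h3_dilation: "derivation 3 h3 (h3_dilation \<mu>)"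
  unfolding derivation_def by (simp add: all_lessThan_3 sum_lessThan_3 h3_def h3_dilation_def)

lemma ricci_h3_diag_gram:
  assumes d: "\<forall>i<3. d i \<noteq> 0"
  shows "\<forall>i<3. \<forall>k<3. ricci 3 h3 (diag_gram 3 d) i k =
    (if i = k then (if k = 0 then 1 else -1) * d 0 / (2 * d 1 * d 2) * d k else 0)"
  unfolding ricci_def curv_def Let_def christoffel_diag_gram[OF d]
  using d by (simp add: all_lessThan_3 sum_lessThan_3 h3_def christoffel_diag_def power2_eq_square)

lemma alg_ricci_soliton_h3_diag_gram:
  assumes d: "\<forall>i<3. d i \<noteq> 0"
  shows "alg_ricci_soliton 3 h3 (diag_gram 3 d)"
proof -
  define \<rho> where "\<rho> = d 0 / (2 * d 1 * d 2)"
  have "\<forall>k<3. \<forall>i<3. ricci_op 3 h3 (diag_gram 3 d) k i =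
    - 3 * \<rho> * (if k = i then 1 else 0) + h3_dilation (2 * \<rho>) k i"
    using d ricci_h3_diag_gram[OF d]
    by (simp add: ricci_op_diag_gram[OF d] all_lessThan_3 h3_dilation_def \<rho>_def)
  then show ?thesis
    unfolding alg_ricci_soliton_def
    using lie_alg_h3 pr_metric_diag_gram[OF d] derivation_h3_dilation by blast
qed

definition h3_ext :: sconst where
  "h3_ext i j k = h3 i j k +
    (if i = 3 \<and> j = k \<and> j < 3 then (if j = 0 then 1 else 1 / 2)
     else if j = 3 \<and> i = k \<and> i < 3 then - (if i = 0 then 1 else 1 / 2) else 0)"

definition h3_ext_gram :: "(nat \<Rightarrow> real) \<Rightarrow> gram" where
  "h3_ext_gram d = diag_gram 4 (d(3 := d 1 * d 2 / d 0))"

lemma brk_h3_ext: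
  "brk 4 h3_ext X Y = (\<lambda>k.
     if k = 0 then X 1 * Y 2 - X 2 * Y 1 + X 3 * Y 0 - X 0 * Y 3
     else if k = 1 \<or> k = 2 then (X 3 * Y k - X k * Y 3) / 2 else 0)"
  by (auto simp: fun_eq_iff brk_def sum_lessThan_4 h3_ext_def h3_def)

lemma lie_alg_h3_ext: "lie_alg 4 h3_ext"
  unfolding lie_alg_def by (simp add: all_lessThan_4 sum_lessThan_4 h3_ext_def h3_def)

lemma dser_h3_ext_1: "dser 4 h3_ext 1 = vecs 3"
proof (intro equalityI subsetI)
  fix v
  assume "v \<in> dser 4 h3_ext 1"
  then have "v p = 0" if "p \<ge> 3" for p
    using that by (auto simp: brk_h3_ext elim!: lin_span_coordinate_zero)
  then show "v \<in> vecs 3"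
    by (simp add: vecs_def)
next
  fix v
  assume v: "v \<in> vecs 3"
  define e3 where "e3 = (\<lambda>i::nat. if i = 3 then 1 else (0::real))"
  define w where "w = (\<lambda>i::nat. if i = 0 then v 0 else if i = 1 \<or> i = 2 then 2 * v i else 0)"
  have "e3 \<in> vecs 4" "w \<in> vecs 4"
    by (auto simp: vecs_def e3_def w_def)
  moreover have "brk 4 h3_ext e3 w = v"
    using v by (auto simp: fun_eq_iff brk_h3_ext e3_def w_def vecs_def)
  ultimately show "v \<in> dser 4 h3_ext 1"
    by (auto intro!: lin_span_superset)
qed

lemma solvable_h3_ext: "solvable_la 4 h3_ext"
proof -
  have dser2: "Y p = 0" if "Y \<in> dser 4 h3_ext 2" "p \<noteq> 0" for Y p
  proof -
    have "brk 4 h3_ext X Z p = 0" if "X \<in> vecs 3" "Z \<in> vecs 3" for X Z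
      using that \<open>p \<noteq> 0\<close> by (simp add: brk_h3_ext vecs_def)
    then show ?thesis
      using \<open>Y \<in> dser 4 h3_ext 2\<close>
      unfolding dser.simps(2)[of _ _ 1, unfolded Suc_1] dser_h3_ext_1
      by (auto elim!: lin_span_coordinate_zero)
  qed
  have "dser 4 h3_ext 3 = {\<lambda>_. 0}"
    unfolding dser.simps(2)[of _ _ 2, simplified Suc_numeral add_num_simps]
  proof (rule lin_span_eq_zero)
    fix u
    assume "u \<in> {brk 4 h3_ext X Y |X Y. X \<in> dser 4 h3_ext 2 \<and> Y \<in> dser 4 h3_ext 2}"
    then obtain X Y where u: "u = brk 4 h3_ext X Y" and "X \<in> dser 4 h3_ext 2" "Y \<in> dser 4 h3_ext 2"
      by blast
    then have "X 1 = 0" "X 2 = 0" "X 3 = 0" "Y 1 = 0" "Y 2 = 0" "Y 3 = 0"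
      using dser2 by simp_all
    then show "u = (\<lambda>_. 0)"
      unfolding u brk_h3_ext by (simp add: fun_eq_iff)
  qed
  then show ?thesis
    unfolding solvable_la_def by blast
qed

lemma diag_gram_orthogonal_complement:
  assumes "n \<le> N" and d: "\<forall>i. n \<le> i \<and> i < N \<longrightarrow> d i \<noteq> 0"
  shows "{X \<in> vecs N. \<forall>Y\<in>vecs N. (\<forall>i<n. Y i = 0) \<longrightarrow> ip N (diag_gram N d) X Y = 0} = vecs n"
proof (intro equalityI subsetI)
  fix X
  assume "X \<in> {X \<in> vecs N. \<forall>Y\<in>vecs N. (\<forall>i<n. Y i = 0) \<longrightarrow> ip N (diag_gram N d) X Y = 0}"
  then have X: "X \<in> vecs N" and orth: "\<And>Y. Y \<in> vecs N \<Longrightarrow> \<forall>i<n. Y i = 0 \<Longrightarrow> ip N (diag_gram N d) X Y = 0"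
    by auto
  have "X p = 0" if "n \<le> p" for p
  proof (cases "p < N")
    case True
    let ?e = "\<lambda>i. if i = p then 1 else (0::real)"
    have "?e \<in> vecs N" "\<forall>i<n. ?e i = 0"
      using True that by (auto simp: vecs_def)
    then have "ip N (diag_gram N d) X ?e = 0"
      by (rule orth)
    then have "X p * d p = 0"
      using True by (simp add: ip_diag_gram_unit_vector)
    then show ?thesis
      using d True that by simp
  next
    case False
    then show ?thesis
      using X by (simp add: vecs_def)
  qed
  then show "X \<in> vecs n"
    by (simp add: vecs_def)
next
  fix X
  assume X: "X \<in> vecs n"
  have "ip N (diag_gram N d) X Y = 0" if "\<forall>i<n. Y i = 0" for Y
    unfolding ip_diag_gram
  proof (intro sum.neutral ballI)
    fix i
    show "X i * d i * Y i = 0"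
      using X that by (cases "i < n") (auto simp: vecs_def)
  qed
  then show "X \<in> {X \<in> vecs N. \<forall>Y\<in>vecs N. (\<forall>i<n. Y i = 0) \<longrightarrow> ip N (diag_gram N d) X Y = 0}"
    using X \<open>n \<le> N\<close> by (auto simp: vecs_def)
qed

lemma metric_solv_ext_h3_ext:
  assumes d: "\<forall>i<3. d i \<noteq> 0"
  shows "metric_solv_ext 3 h3 (diag_gram 3 d) 4 h3_ext (h3_ext_gram d)"
proof -
  have d': "\<forall>i<4. (d(3 := d 1 * d 2 / d 0)) i \<noteq> 0"
    using d by (simp add: all_lessThan_4)
  then have "{X \<in> vecs 4. \<forall>Y\<in>vecs 4. (\<forall>i<3. Y i = 0) \<longrightarrow> ip 4 (h3_ext_gram d) X Y = 0} = vecs 3"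
    unfolding h3_ext_gram_def by (intro diag_gram_orthogonal_complement) auto
  moreover have "pr_metric 4 (h3_ext_gram d)"
    unfolding h3_ext_gram_def using d' by (rule pr_metric_diag_gram)
  moreover have "\<forall>i<3. \<forall>j<3. \<forall>k<4. h3_ext i j k = (if k < 3 then h3 i j k else 0)"
    by (simp add: all_lessThan_3 all_lessThan_4 h3_ext_def h3_def)
  moreover have "\<forall>i<3. \<forall>j<3. h3_ext_gram d i j = diag_gram 3 d i j"
    by (simp add: h3_ext_gram_def diag_gram_def)
  ultimately show ?thesis
    unfolding metric_solv_ext_def using lie_alg_h3_ext solvable_h3_ext dser_h3_ext_1 by simp
qed

lemma einstein_h3_ext:
  assumes d: "\<forall>i<3. d i \<noteq> 0"
  shows "einstein 4 h3_ext (h3_ext_gram d)"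
proof -
  let ?d = "d(3 := d 1 * d 2 / d 0)"
  have d': "\<forall>i<4. ?d i \<noteq> 0"
    using d by (simp add: all_lessThan_4)
  have "\<forall>i<4. \<forall>j<4. ricci 4 h3_ext (h3_ext_gram d) i j =
      - 3 * (d 0 / (2 * d 1 * d 2)) * h3_ext_gram d i j"
    unfolding h3_ext_gram_def ricci_def curv_def Let_def christoffel_diag_gram[OF d']
    using d by (simp add: all_lessThan_4 sum_lessThan_4 h3_ext_def h3_def christoffel_diag_def diag_gram_def)
  then show ?thesis
    unfolding einstein_def by blast
qed

lemma h3_diag_gram_nilsoliton_with_einstein_extension:
  assumes "\<forall>i<3. d i \<noteq> 0"
  shows "nilsoliton 3 h3 (diag_gram 3 d) \<and>
    (\<exists>N c' G'. metric_solv_ext 3 h3 (diag_gram 3 d) N c' G' \<and> einstein N c' G')"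
  unfolding nilsoliton_def
  using nilpotent_h3 alg_ricci_soliton_h3_diag_gram[OF assms]
    metric_solv_ext_h3_ext[OF assms] einstein_h3_ext[OF assms] by blast

theorem mainTheorem4:
  shows "nilsoliton 3 h3 g1 \<and> nilsoliton 3 h3 g2 \<and>
    (\<exists>N c' G'. metric_solv_ext 3 h3 g1 N c' G' \<and> einstein N c' G') \<and>
    (\<exists>N c' G'. metric_solv_ext 3 h3 g2 N c' G' \<and> einstein N c' G')"
proof -
  have "g1 = diag_gram 3 (\<lambda>i. if i = 2 then -1 else 1)"
    and "g2 = diag_gram 3 (\<lambda>i. if i = 0 then -1 else 1)"
    by (auto simp: fun_eq_iff g1_def g2_def diag_gram_def)
  then show ?thesis
    using h3_diag_gram_nilsoliton_with_einstein_extension[of "\<lambda>i. if i = 2 then -1 else 1"]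
      h3_diag_gram_nilsoliton_with_einstein_extension[of "\<lambda>i. if i = 0 then -1 else 1"]
    by simp
qed

end
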